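(* Let $\alpha$ be a snowy weak composition and $i$ an index with $\alpha_i>\alpha_{i+1}$. Then $\mathsf{rajcode}(s_i\alpha)=s_i\,\mathsf{rajcode}(\alpha)+e_i$, where $s_i$ swaps the $i$-th and $(i+1)$-th entries and $e_i$ is the weak composition with $1$ in entry $i$ and $0$ elsewhere.
   Context: A weak composition is an infinite sequence of nonnegative integers with finitely many positive entries; it is snowy if its positive entries are distinct. $D(\alpha)=\{(r,c):1\le c\le\alpha_r\}$ (row 1 on top). For a diagram $D$, $\mathsf{snow}(D)$ is built by iterating through rows from bottom to top: in row $r$ take the rightmost cell $(r,c)\in D$ such that column $c$ contains no dark cloud yet; if it exists label it a dark cloud and add snowflake cells at $(r',c)$ for all $r'<r$ with $(r',c)\notin D$. $\mathsf{rajcode}(\alpha)_r$ is the number of cells of $\mathsf{snow}(D(\alpha))$ in row $r$. *)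

theory Defs
  imports Main
begin

text \<open>Weak compositions are functions nat \<Rightarrow> nat indexed by the positive integers;
  the (unused) entry at index 0 is required to be 0.\<close>

definition weak_comp :: "(nat \<Rightarrow> nat) \<Rightarrow> bool" where
  "weak_comp \<alpha> \<longleftrightarrow> \<alpha> 0 = 0 \<and> finite {r. \<alpha> r \<noteq> 0}"

definition snowy :: "(nat \<Rightarrow> nat) \<Rightarrow> bool" where
  "snowy \<alpha> \<longleftrightarrow> weak_comp \<alpha> \<and> inj_on \<alpha> {r. 0 < \<alpha> r}"

definition diagram :: "(nat \<Rightarrow> nat) \<Rightarrow> (nat \<times> nat) set" where
  "diagram \<alpha> = {(r, c). 1 \<le> r \<and> 1 \<le> c \<and> c \<le> \<alpha> r}"

text \<open>One step of the snow construction, processing row r.  State: (set of columns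
  already containing a dark cloud, set of snowflake cells added so far).\<close>

definition snow_step ::
  "(nat \<times> nat) set \<Rightarrow> nat \<Rightarrow> nat set \<times> (nat \<times> nat) set \<Rightarrow> nat set \<times> (nat \<times> nat) set" where
  "snow_step D r st =
     (let C = fst st; S = snd st; cand = {c. (r, c) \<in> D \<and> c \<notin> C} in
      if cand = {} then st
      else (let c = Max cand in
            (insert c C, S \<union> {(r', c) | r'. 1 \<le> r' \<and> r' < r \<and> (r', c) \<notin> D})))"

definition snow_state :: "(nat \<times> nat) set \<Rightarrow> nat \<Rightarrow> nat set \<times> (nat \<times> nat) set" where
  "snow_state D N = fold (snow_step D) (rev [1..<Suc N]) ({}, {})"

definition max_row :: "(nat \<times> nat) set \<Rightarrow> nat" where
  "max_row D = (if D = {} then 0 else Max (fst ` D))"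

definition snow :: "(nat \<times> nat) set \<Rightarrow> (nat \<times> nat) set" where
  "snow D = D \<union> snd (snow_state D (max_row D))"

definition rajcode :: "(nat \<Rightarrow> nat) \<Rightarrow> nat \<Rightarrow> nat" where
  "rajcode \<alpha> r = card {c. (r, c) \<in> snow (diagram \<alpha>)}"

definition swap_at :: "nat \<Rightarrow> (nat \<Rightarrow> nat) \<Rightarrow> nat \<Rightarrow> nat" where
  "swap_at i \<alpha> = (\<lambda>r. if r = i then \<alpha> (Suc i) else if r = Suc i then \<alpha> i else \<alpha> r)"

definition unit_vec :: "nat \<Rightarrow> nat \<Rightarrow> nat" where
  "unit_vec i = (\<lambda>r. if r = i then 1 else 0)"

end

theory Submission
  imports Defs "HOL-Combinatorics.Transposition"
begin

text \<open>Since the row lengths of a snowy composition are distinct, when row s is processed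
  its last cell (s, \<alpha> s) lies in a column without a dark cloud, so the dark clouds are
  exactly the row ends.  Hence row r of snow(D(\<alpha>)) consists of its \<alpha> r own cells and one
  snowflake for every lower row s > r that is longer, i.e.
  rajcode(\<alpha>) r = \<alpha> r + #{s > r. \<alpha> r < \<alpha> s}.
  Swapping rows i and i+1 permutes the rows counted for any other row; for row i it adds
  the (now longer) row i+1, and for row i+1 it removes nothing, because \<alpha> (i+1) < \<alpha> i.\<close>

definition cloud_columns :: "(nat \<Rightarrow> nat) \<Rightarrow> nat set \<Rightarrow> nat set" where
  "cloud_columns \<alpha> A = {\<alpha> s | s. s \<in> A \<and> 0 < \<alpha> s}"

definition snowflakes :: "(nat \<Rightarrow> nat) \<Rightarrow> nat set \<Rightarrow> (nat \<times> nat) set" where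
  "snowflakes \<alpha> A = {(r, \<alpha> s) | r s. s \<in> A \<and> 1 \<le> r \<and> r < s \<and> \<alpha> r < \<alpha> s}"

definition longer_rows_below :: "(nat \<Rightarrow> nat) \<Rightarrow> nat \<Rightarrow> nat set" where
  "longer_rows_below \<alpha> r = {s. r < s \<and> \<alpha> r < \<alpha> s}"

lemma snow_step_snowy:
  assumes "snowy \<alpha>" and "r \<notin> A"
  shows "snow_step (diagram \<alpha>) r (cloud_columns \<alpha> A, snowflakes \<alpha> A)
       = (cloud_columns \<alpha> (insert r A), snowflakes \<alpha> (insert r A))"
proof (cases "\<alpha> r = 0")
  case True
  then have "{c. (r, c) \<in> diagram \<alpha> \<and> c \<notin> cloud_columns \<alpha> A} = {}"
    by (auto simp: diagram_def)
  moreover have "cloud_columns \<alpha> (insert r A) = cloud_columns \<alpha> A"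
    and "snowflakes \<alpha> (insert r A) = snowflakes \<alpha> A"
    using True by (auto simp: cloud_columns_def snowflakes_def)
  ultimately show ?thesis by (simp add: snow_step_def)
next
  case False
  have inj: "inj_on \<alpha> {r. 0 < \<alpha> r}" and "\<alpha> 0 = 0"
    using assms(1) by (auto simp: snowy_def weak_comp_def)
  with False have "1 \<le> r" by (cases r) auto
  have "\<alpha> r \<notin> cloud_columns \<alpha> A"
    using False \<open>r \<notin> A\<close> inj_onD[OF inj] by (fastforce simp: cloud_columns_def)
  define cand where "cand = {c. (r, c) \<in> diagram \<alpha> \<and> c \<notin> cloud_columns \<alpha> A}"
  have "\<alpha> r \<in> cand"
    using \<open>\<alpha> r \<notin> cloud_columns \<alpha> A\<close> False \<open>1 \<le> r\<close> by (auto simp: cand_def diagram_def)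
  moreover have "finite cand"
    by (rule finite_subset[of _ "{..\<alpha> r}"]) (auto simp: cand_def diagram_def)
  ultimately have "cand \<noteq> {}" and "Max cand = \<alpha> r"
    by (auto intro!: Max_eqI simp: cand_def diagram_def)
  moreover have "insert (\<alpha> r) (cloud_columns \<alpha> A) = cloud_columns \<alpha> (insert r A)"
    using False by (auto simp: cloud_columns_def)
  moreover have "snowflakes \<alpha> A \<union> {(r', \<alpha> r) | r'. 1 \<le> r' \<and> r' < r \<and> (r', \<alpha> r) \<notin> diagram \<alpha>}
      = snowflakes \<alpha> (insert r A)"
    using False by (auto simp: snowflakes_def diagram_def not_le intro: exI[of _ r])
  ultimately show ?thesis
    unfolding snow_step_def Let_def prod.sel cand_def[symmetric] by simp
qed

lemma fold_snow_step_snowy: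
  assumes "snowy \<alpha>" and "distinct rs" and "set rs \<inter> A = {}"
  shows "fold (snow_step (diagram \<alpha>)) rs (cloud_columns \<alpha> A, snowflakes \<alpha> A)
       = (cloud_columns \<alpha> (A \<union> set rs), snowflakes \<alpha> (A \<union> set rs))"
  using assms(2,3)
proof (induction rs arbitrary: A)
  case Nil
  then show ?case by simp
next
  case (Cons r rs)
  then show ?case
    using snow_step_snowy[OF \<open>snowy \<alpha>\<close>, of r A] Cons.IH[of "insert r A"] by auto
qed

lemma snow_state_snowy:
  assumes "snowy \<alpha>"
  shows "snow_state (diagram \<alpha>) N = (cloud_columns \<alpha> {1..N}, snowflakes \<alpha> {1..N})"
proof -
  have "cloud_columns \<alpha> {} = {}" and "snowflakes \<alpha> {} = {}"
    by (auto simp: cloud_columns_def snowflakes_def)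
  moreover have "{} \<union> set (rev [1..<Suc N]) = {1..N}"
    by auto
  ultimately show ?thesis
    using fold_snow_step_snowy[OF assms, of "rev [1..<Suc N]" "{}"]
    by (simp only: snow_state_def) simp
qed

lemma le_max_row_diagram:
  assumes "weak_comp \<alpha>" and "0 < \<alpha> s"
  shows "s \<le> max_row (diagram \<alpha>)"
proof -
  have "fst ` diagram \<alpha> \<subseteq> {r. \<alpha> r \<noteq> 0}"
    by (auto simp: diagram_def)
  then have "finite (fst ` diagram \<alpha>)"
    using assms(1) by (auto simp: weak_comp_def intro: finite_subset)
  moreover have "1 \<le> s"
    using assms by (cases s) (auto simp: weak_comp_def)
  then have "s \<in> fst ` diagram \<alpha>"
    using assms(2) by (force simp: diagram_def)
  ultimately show ?thesis
    by (auto simp: max_row_def)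
qed

lemma finite_longer_rows_below:
  assumes "weak_comp \<alpha>"
  shows "finite (longer_rows_below \<alpha> r)"
  using assms unfolding weak_comp_def longer_rows_below_def
  by (auto intro: finite_subset[of _ "{r. \<alpha> r \<noteq> 0}"])

lemma rajcode_snowy:
  assumes "snowy \<alpha>" and "1 \<le> r"
  shows "rajcode \<alpha> r = \<alpha> r + card (longer_rows_below \<alpha> r)"
proof -
  have wc: "weak_comp \<alpha>" and inj: "inj_on \<alpha> {r. 0 < \<alpha> r}"
    using assms(1) by (auto simp: snowy_def)
  have "{c. (r, c) \<in> snowflakes \<alpha> {1..max_row (diagram \<alpha>)}} = \<alpha> ` longer_rows_below \<alpha> r"
    using assms(2) le_max_row_diagram[OF wc]
    by (force simp: snowflakes_def longer_rows_below_def)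
  then have "{c. (r, c) \<in> snow (diagram \<alpha>)} = {1..\<alpha> r} \<union> \<alpha> ` longer_rows_below \<alpha> r"
    using assms(2) unfolding snow_def snow_state_snowy[OF assms(1)]
    by (auto simp: diagram_def)
  moreover have "inj_on \<alpha> (longer_rows_below \<alpha> r)"
    by (rule inj_on_subset[OF inj]) (auto simp: longer_rows_below_def)
  moreover have "{1..\<alpha> r} \<inter> \<alpha> ` longer_rows_below \<alpha> r = {}"
    by (auto simp: longer_rows_below_def)
  ultimately show ?thesis
    by (simp add: rajcode_def card_Un_disjoint card_image finite_longer_rows_below[OF wc])
qed

lemma rajcode_0_snowy:
  assumes "snowy \<alpha>"
  shows "rajcode \<alpha> 0 = 0"
  unfolding rajcode_def snow_def snow_state_snowy[OF assms]
  by (simp add: diagram_def snowflakes_def)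

lemma swap_at_eq_comp_transpose: "swap_at i \<alpha> = \<alpha> \<circ> transpose i (Suc i)"
  by (simp add: fun_eq_iff swap_at_def transpose_def)

lemma snowy_swap_at:
  assumes "snowy \<alpha>" and "1 \<le> i"
  shows "snowy (swap_at i \<alpha>)"
proof -
  let ?\<tau> = "transpose i (Suc i)"
  have "\<alpha> 0 = 0" and fin: "finite {r. \<alpha> r \<noteq> 0}" and inj: "inj_on \<alpha> {r. 0 < \<alpha> r}"
    using assms(1) by (auto simp: snowy_def weak_comp_def)
  have "{r. swap_at i \<alpha> r \<noteq> 0} = ?\<tau> ` {r. \<alpha> r \<noteq> 0}"
    by (force simp: swap_at_eq_comp_transpose image_iff intro: exI[of _ "?\<tau> _"])
  moreover have "inj_on (\<alpha> \<circ> ?\<tau>) {r. 0 < (\<alpha> \<circ> ?\<tau>) r}"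
  proof (rule inj_onI)
    fix x y
    assume "x \<in> {r. 0 < (\<alpha> \<circ> ?\<tau>) r}" "y \<in> {r. 0 < (\<alpha> \<circ> ?\<tau>) r}"
      and "(\<alpha> \<circ> ?\<tau>) x = (\<alpha> \<circ> ?\<tau>) y"
    then have "?\<tau> x = ?\<tau> y"
      using inj by (auto dest: inj_onD)
    then show "x = y"
      by (rule transpose_eq_imp_eq)
  qed
  ultimately show ?thesis
    using \<open>\<alpha> 0 = 0\<close> fin assms(2)
    by (simp add: snowy_def weak_comp_def swap_at_eq_comp_transpose)
qed

lemma longer_rows_below_swap_at_other:
  assumes "r \<noteq> i" and "r \<noteq> Suc i"
  shows "longer_rows_below (swap_at i \<alpha>) r = transpose i (Suc i) ` longer_rows_below \<alpha> r"
proof -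
  have "r < transpose i (Suc i) s \<longleftrightarrow> r < s" for s
    using assms by (auto simp: transpose_def)
  then show ?thesis
    using assms by (force simp: longer_rows_below_def swap_at_eq_comp_transpose image_iff
        intro: exI[of _ "transpose i (Suc i) _"])
qed

lemma longer_rows_below_swap_at_first:
  assumes "\<alpha> (Suc i) < \<alpha> i"
  shows "longer_rows_below (swap_at i \<alpha>) i = insert (Suc i) (longer_rows_below \<alpha> (Suc i))"
  using assms by (auto simp: longer_rows_below_def swap_at_def)

lemma longer_rows_below_swap_at_second:
  assumes "\<alpha> (Suc i) < \<alpha> i"
  shows "longer_rows_below (swap_at i \<alpha>) (Suc i) = longer_rows_below \<alpha> i"
  using assms by (auto simp: longer_rows_below_def swap_at_def)

theorem corollary4p19:
  fixes \<alpha> :: "nat \<Rightarrow> nat" and i :: nat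
  assumes "snowy \<alpha>" and "1 \<le> i" and "\<alpha> i > \<alpha> (Suc i)"
  shows "rajcode (swap_at i \<alpha>) = (\<lambda>r. swap_at i (rajcode \<alpha>) r + unit_vec i r)"
proof
  fix r
  have snowy: "snowy (swap_at i \<alpha>)"
    using assms(1,2) by (rule snowy_swap_at)
  consider "r = 0" | "r = i" | "r = Suc i" | "1 \<le> r" "r \<noteq> i" "r \<noteq> Suc i"
    by linarith
  then show "rajcode (swap_at i \<alpha>) r = swap_at i (rajcode \<alpha>) r + unit_vec i r"
  proof cases
    case 1
    then show ?thesis
      using assms(2) rajcode_0_snowy[OF snowy] rajcode_0_snowy[OF assms(1)]
      by (simp add: swap_at_def unit_vec_def)
  next
    case 2
    have "finite (longer_rows_below \<alpha> (Suc i))"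
      using assms(1) by (simp add: snowy_def finite_longer_rows_below)
    then show ?thesis
      using 2 assms(2) rajcode_snowy[OF snowy assms(2)] rajcode_snowy[OF assms(1), of "Suc i"]
        longer_rows_below_swap_at_first[OF assms(3)]
      by (simp add: longer_rows_below_def swap_at_def unit_vec_def)
  next
    case 3
    then show ?thesis
      using assms(2) rajcode_snowy[OF snowy, of "Suc i"] rajcode_snowy[OF assms(1,2)]
        longer_rows_below_swap_at_second[OF assms(3)]
      by (simp add: swap_at_def unit_vec_def)
  next
    case 4
    then show ?thesis
      using rajcode_snowy[OF snowy, of r] rajcode_snowy[OF assms(1), of r]
        longer_rows_below_swap_at_other[OF 4(2,3)]
      by (simp add: card_image swap_at_def unit_vec_def)
  qed
qed

end
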